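(* Let $k\ge3$, $F$ a field, $\Phi\le F^*$ of order $k$ with generator $\varphi$, $(F,\Phi)$ circular. Let $\mathcal{G}=\mathcal{G}_0$ if $k$ is even and $\mathcal{G}=\mathcal{G}_1$ if $k$ is odd. Then every $\mathcal{G}$-orbit in $\mathcal{O}_\varphi(F,k)$ contains a reduced element.
   Context: $\mathbf{k}=\{1,\dots,k-1\}$, $\mathbf{k}_0=\{0,\dots,k-1\}$. $(F,\Phi)$ is circular if $|(\Phi a+b)\cap\Phi c|\le2$ for all $a,b,c\in F^*$, with $\Phi a+b=\{\lambda a+b:\lambda\in\Phi\}$. A quadruple $(i,j\mid s,t)\in\mathbf{k}^4$ with $i\ne s$ is an overlap (w.r.t. $\varphi$) if $\varphi^\omega(\varphi^j-1)(\varphi^s-1)=(\varphi^i-1)(\varphi^t-1)$ for some $\omega\in\mathbf{k}_0$; it is trivial if one of $i\equiv\pm j$, $j\equiv\pm t$, $t\equiv\pm s$, $s\equiv\pm i\pmod k$ holds, nontrivial otherwise; $\mathcal{O}_\varphi(F,k)$ is the set of nontrivial overlaps. For $m=1,\dots,4$, $\kappa_m$ replaces the $m$-th entry $u$ of a quadruple by $k-u$. $D_4$ is the group of coordinate permutations of $(i,j\mid s,t)$ generated by $(i,t)$, $(j,s)$, $(i,j)(s,t)$. $\mathcal{G}_0=\langle\kappa_1,\dots,\kappa_4,D_4\rangle$ and $\mathcal{G}_1=\langle\kappa_1\kappa_4,\kappa_2\kappa_4,\kappa_3\kappa_4,D_4\rangle$. An element $(i,j\mid s,t)$ is reduced if $i<j\le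 s$, $j\le k/2$, and at most one of $i,j,s,t$ exceeds $k/2$. *)

theory Defs
  imports Main
begin

type_synonym quad = "nat \<times> nat \<times> nat \<times> nat"

text \<open>The subgroup generated by phi (finite, so this is the cyclic subgroup).\<close>
definition cyc :: "'a::field \<Rightarrow> 'a set" where
  "cyc \<phi> = range (\<lambda>n::nat. \<phi> ^ n)"

definition circular :: "'a::field set \<Rightarrow> bool" where
  "circular \<Phi> \<longleftrightarrow> (\<forall>a b c. a \<noteq> 0 \<longrightarrow> b \<noteq> 0 \<longrightarrow> c \<noteq> 0 \<longrightarrow>
      card ((\<lambda>l. l * a + b) ` \<Phi> \<inter> (\<lambda>l. l * c) ` \<Phi>) \<le> 2)"

definition idx :: "nat \<Rightarrow> nat set" where
  "idx k = {1..k-1}"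

definition is_overlap :: "'a::field \<Rightarrow> nat \<Rightarrow> quad \<Rightarrow> bool" where
  "is_overlap \<phi> k q = (case q of (i, j, s, t) \<Rightarrow>
      i \<in> idx k \<and> j \<in> idx k \<and> s \<in> idx k \<and> t \<in> idx k \<and> i \<noteq> s \<and>
      (\<exists>\<omega><k. \<phi> ^ \<omega> * (\<phi> ^ j - 1) * (\<phi> ^ s - 1) = (\<phi> ^ i - 1) * (\<phi> ^ t - 1)))"

definition pm_cong :: "nat \<Rightarrow> nat \<Rightarrow> nat \<Rightarrow> bool" where
  "pm_cong k u v \<longleftrightarrow> u mod k = v mod k \<or> (u + v) mod k = 0"

definition trivial_quad :: "nat \<Rightarrow> quad \<Rightarrow> bool" where
  "trivial_quad k q = (case q of (i, j, s, t) \<Rightarrow>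
      pm_cong k i j \<or> pm_cong k j t \<or> pm_cong k t s \<or> pm_cong k s i)"

definition nontriv_overlaps :: "'a::field \<Rightarrow> nat \<Rightarrow> quad set" where
  "nontriv_overlaps \<phi> k = {q. is_overlap \<phi> k q \<and> \<not> trivial_quad k q}"

definition kappa1 :: "nat \<Rightarrow> quad \<Rightarrow> quad" where
  "kappa1 k q = (case q of (i, j, s, t) \<Rightarrow> (k - i, j, s, t))"
definition kappa2 :: "nat \<Rightarrow> quad \<Rightarrow> quad" where
  "kappa2 k q = (case q of (i, j, s, t) \<Rightarrow> (i, k - j, s, t))"
definition kappa3 :: "nat \<Rightarrow> quad \<Rightarrow> quad" where
  "kappa3 k q = (case q of (i, j, s, t) \<Rightarrow> (i, j, k - s, t))"
definition kappa4 :: "nat \<Rightarrow> quad \<Rightarrow> quad" where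
  "kappa4 k q = (case q of (i, j, s, t) \<Rightarrow> (i, j, s, k - t))"

definition sw_it :: "quad \<Rightarrow> quad" where
  "sw_it q = (case q of (i, j, s, t) \<Rightarrow> (t, j, s, i))"
definition sw_js :: "quad \<Rightarrow> quad" where
  "sw_js q = (case q of (i, j, s, t) \<Rightarrow> (i, s, j, t))"
definition sw_ij_st :: "quad \<Rightarrow> quad" where
  "sw_ij_st q = (case q of (i, j, s, t) \<Rightarrow> (j, i, t, s))"

definition gens0 :: "nat \<Rightarrow> (quad \<Rightarrow> quad) set" where
  "gens0 k = {kappa1 k, kappa2 k, kappa3 k, kappa4 k, sw_it, sw_js, sw_ij_st}"

definition gens1 :: "nat \<Rightarrow> (quad \<Rightarrow> quad) set" where
  "gens1 k = {kappa1 k \<circ> kappa4 k, kappa2 k \<circ> kappa4 k, kappa3 k \<circ> kappa4 k,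
              sw_it, sw_js, sw_ij_st}"

text \<open>Orbit of x under the group generated by a set of (involutive) maps:
  closure of {x} under applying generators.\<close>
inductive_set orbit :: "(quad \<Rightarrow> quad) set \<Rightarrow> quad \<Rightarrow> quad set"
  for gs :: "(quad \<Rightarrow> quad) set" and x :: quad where
  base: "x \<in> orbit gs x"
| step: "y \<in> orbit gs x \<Longrightarrow> g \<in> gs \<Longrightarrow> g y \<in> orbit gs x"

definition reduced :: "nat \<Rightarrow> quad \<Rightarrow> bool" where
  "reduced k q = (case q of (i, j, s, t) \<Rightarrow>
      i < j \<and> j \<le> s \<and> 2 * j \<le> k \<and>
      length (filter (\<lambda>u. 2 * u > k) [i, j, s, t]) \<le> 1)"

end

theory Submission
  imports Defs
begin

text \<open>
  Only the range of the indices and the nontriviality of an overlap are needed. Nontriviality says that the entries adjacent on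
  the 4-cycle i, j, t, s are pairwise incongruent up to sign mod k, a property preserved by
  replacing entries by their representatives in [0, k/2] via the maps kappa_m (for odd k
  via kappa_m kappa_4, which fold i, j, s and leave only t possibly above k/2). The group
  D4 is the symmetry group of this 4-cycle, so it moves a minimal entry to position i and
  its smaller neighbour to position j; then i < j \<le> s, and j \<le> k/2 since at most one
  entry exceeds k/2.
\<close>

lemma pm_cong_refl: "pm_cong k u u"
  by (simp add: pm_cong_def)

lemma pm_cong_sym: "pm_cong k u v \<Longrightarrow> pm_cong k v u"
  by (auto simp: pm_cong_def add.commute)

lemma pm_cong_trans:
  assumes "pm_cong k u v" "pm_cong k v w"
  shows "pm_cong k u w"
  using assms[unfolded pm_cong_def]
proof (elim disjE)
  assume "u mod k = v mod k" "v mod k = w mod k"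
  then show ?thesis by (simp add: pm_cong_def)
next
  assume "u mod k = v mod k" "(v + w) mod k = 0"
  then have "(u + w) mod k = 0" by (metis mod_add_left_eq)
  then show ?thesis by (simp add: pm_cong_def)
next
  assume "(u + v) mod k = 0" "v mod k = w mod k"
  then have "(u + w) mod k = 0" by (metis mod_add_right_eq)
  then show ?thesis by (simp add: pm_cong_def)
next
  assume uv: "(u + v) mod k = 0" and vw: "(v + w) mod k = 0"
  have "u mod k = (u + (v + w)) mod k" using vw by (metis mod_add_right_eq add_0_right)
  also have "\<dots> = (w + (u + v)) mod k" by (simp add: ac_simps)
  also have "\<dots> = w mod k" using uv by (metis mod_add_right_eq add_0_right)
  finally show ?thesis by (simp add: pm_cong_def)
qed

lemma pm_cong_diff: "u \<le> k \<Longrightarrow> pm_cong k (k - u) u"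
  by (simp add: pm_cong_def)

lemma neq_if_not_pm_cong:
  assumes "pm_cong k u' u" "pm_cong k v' v" "\<not> pm_cong k u v"
  shows "u' \<noteq> v'"
proof
  assume "u' = v'"
  with assms(1,2) have "pm_cong k u v" by (metis pm_cong_sym pm_cong_trans)
  with assms(3) show False ..
qed

definition low_rep :: "nat \<Rightarrow> nat \<Rightarrow> nat" where
  "low_rep k u = (if k < 2 * u then k - u else u)"

lemma low_rep_not_large: "\<not> k < 2 * low_rep k u"
  by (simp add: low_rep_def) linarith

lemma low_rep_pm_cong: "u \<le> k \<Longrightarrow> pm_cong k (low_rep k u) u"
  by (simp add: low_rep_def pm_cong_refl pm_cong_diff)

lemma orbit_step_if:
  "y \<in> orbit gs x \<Longrightarrow> g \<in> gs \<Longrightarrow> (if P then g y else y) \<in> orbit gs x"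
  by (simp add: orbit.step)

lemma orbit_sw_it: "(a, b, c, d) \<in> orbit gs x \<Longrightarrow> sw_it \<in> gs \<Longrightarrow> (d, b, c, a) \<in> orbit gs x"
  using orbit.step[where y = "(a, b, c, d)" and g = sw_it] by (simp add: sw_it_def)

lemma orbit_sw_js: "(a, b, c, d) \<in> orbit gs x \<Longrightarrow> sw_js \<in> gs \<Longrightarrow> (a, c, b, d) \<in> orbit gs x"
  using orbit.step[where y = "(a, b, c, d)" and g = sw_js] by (simp add: sw_js_def)

lemma orbit_sw_ij_st: "(a, b, c, d) \<in> orbit gs x \<Longrightarrow> sw_ij_st \<in> gs \<Longrightarrow> (b, a, d, c) \<in> orbit gs x"
  using orbit.step[where y = "(a, b, c, d)" and g = sw_ij_st] by (simp add: sw_ij_st_def)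

lemma reduced_intro:
  assumes "p < q" "q \<le> r" "length (filter (\<lambda>u. 2 * u > k) [p, q, r, w]) \<le> 1"
  shows "reduced k (p, q, r, w)"
  using assms by (auto simp: reduced_def split: if_splits)

lemma reduced_in_orbit_at_local_min:
  assumes "sw_js \<in> gs" "(a, b, c, d) \<in> orbit gs x" "a < b" "a < c"
    and "length (filter (\<lambda>u. 2 * u > k) [a, b, c, d]) \<le> 1"
  shows "\<exists>y \<in> orbit gs x. reduced k y"
proof (cases "b \<le> c")
  case True
  then have "reduced k (a, b, c, d)" using assms by (intro reduced_intro) (auto split: if_splits)
  then show ?thesis using assms(2) by blast
next
  case False
  then have "reduced k (a, c, b, d)" using assms by (intro reduced_intro) (auto split: if_splits)
  then show ?thesis using orbit_sw_js[OF assms(2,1)] by blast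
qed

lemma reduced_in_D4_orbit:
  assumes gens: "sw_it \<in> gs" "sw_js \<in> gs" "sw_ij_st \<in> gs"
    and q: "(a, b, c, d) \<in> orbit gs x"
    and cycle: "a \<noteq> b" "b \<noteq> d" "d \<noteq> c" "c \<noteq> a"
    and few_large: "length (filter (\<lambda>u. 2 * u > k) [a, b, c, d]) \<le> 1"
  shows "\<exists>y \<in> orbit gs x. reduced k y"
proof -
  note local_min = reduced_in_orbit_at_local_min[OF gens(2)]
  consider "a \<le> b" "a \<le> c" | "d \<le> b" "d \<le> c" | "b \<le> a" "b \<le> d" | "c \<le> a" "c \<le> d"
    by linarith
  then show ?thesis
  proof cases
    case 1
    with cycle few_large show ?thesis by (intro local_min[OF q]) (auto split: if_splits)
  next
    case 2
    with cycle few_large show ?thesis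
      by (intro local_min[OF orbit_sw_it[OF q gens(1)]]) (auto split: if_splits)
  next
    case 3
    with cycle few_large show ?thesis
      by (intro local_min[OF orbit_sw_ij_st[OF q gens(3)]]) (auto split: if_splits)
  next
    case 4
    with cycle few_large show ?thesis
      by (intro local_min[OF orbit_sw_it[OF orbit_sw_ij_st[OF q gens(3)] gens(1)]])
        (auto split: if_splits)
  qed
qed

lemma low_rep_in_orbit_gens0:
  assumes "(i, j, s, t) \<in> orbit (gens0 k) x"
  shows "(low_rep k i, low_rep k j, low_rep k s, low_rep k t) \<in> orbit (gens0 k) x"
proof -
  have g: "kappa1 k \<in> gens0 k" "kappa2 k \<in> gens0 k" "kappa3 k \<in> gens0 k" "kappa4 k \<in> gens0 k"
    by (simp_all add: gens0_def)
  have "(low_rep k i, j, s, t) \<in> orbit (gens0 k) x"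
    using orbit_step_if[OF assms g(1), of "k < 2 * i"]
    by (cases "k < 2 * i") (simp_all add: kappa1_def low_rep_def)
  from orbit_step_if[OF this g(2), of "k < 2 * j"]
  have "(low_rep k i, low_rep k j, s, t) \<in> orbit (gens0 k) x"
    by (cases "k < 2 * j") (simp_all add: kappa2_def low_rep_def)
  from orbit_step_if[OF this g(3), of "k < 2 * s"]
  have "(low_rep k i, low_rep k j, low_rep k s, t) \<in> orbit (gens0 k) x"
    by (cases "k < 2 * s") (simp_all add: kappa3_def low_rep_def)
  from orbit_step_if[OF this g(4), of "k < 2 * t"]
  show ?thesis
    by (cases "k < 2 * t") (simp_all add: kappa4_def low_rep_def)
qed

lemma reflect_if_pm_cong: "u \<le> k \<Longrightarrow> (if b then k - u else u) \<le> k \<and> pm_cong k (if b then k - u else u) u"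
  by (simp add: pm_cong_diff pm_cong_refl)

lemma low_rep_in_orbit_gens1:
  assumes "(i, j, s, t) \<in> orbit (gens1 k) x" "t \<le> k"
  obtains t' where "(low_rep k i, low_rep k j, low_rep k s, t') \<in> orbit (gens1 k) x"
    "pm_cong k t' t"
proof -
  have g: "kappa1 k \<circ> kappa4 k \<in> gens1 k" "kappa2 k \<circ> kappa4 k \<in> gens1 k"
    "kappa3 k \<circ> kappa4 k \<in> gens1 k"
    by (simp_all add: gens1_def)
  define t1 where "t1 = (if k < 2 * i then k - t else t)"
  define t2 where "t2 = (if k < 2 * j then k - t1 else t1)"
  define t3 where "t3 = (if k < 2 * s then k - t2 else t2)"
  have t1: "t1 \<le> k" "pm_cong k t1 t" using reflect_if_pm_cong[OF assms(2)] by (simp_all add: t1_def)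
  have t2: "t2 \<le> k" "pm_cong k t2 t1" using reflect_if_pm_cong[OF t1(1)] by (simp_all add: t2_def)
  have t3: "t3 \<le> k" "pm_cong k t3 t2" using reflect_if_pm_cong[OF t2(1)] by (simp_all add: t3_def)
  have "(low_rep k i, j, s, t1) \<in> orbit (gens1 k) x"
    using orbit_step_if[OF assms(1) g(1), of "k < 2 * i"]
    by (cases "k < 2 * i") (simp_all add: kappa1_def kappa4_def low_rep_def t1_def)
  from orbit_step_if[OF this g(2), of "k < 2 * j"]
  have "(low_rep k i, low_rep k j, s, t2) \<in> orbit (gens1 k) x"
    by (cases "k < 2 * j") (simp_all add: kappa2_def kappa4_def low_rep_def t2_def)
  from orbit_step_if[OF this g(3), of "k < 2 * s"]
  have "(low_rep k i, low_rep k j, low_rep k s, t3) \<in> orbit (gens1 k) x"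
    by (cases "k < 2 * s") (simp_all add: kappa3_def kappa4_def low_rep_def t3_def)
  moreover have "pm_cong k t3 t" using t1 t2 t3 pm_cong_trans by blast
  ultimately show ?thesis by (rule that)
qed

lemma reduced_in_orbit_gens0:
  assumes "i \<le> k" "j \<le> k" "s \<le> k" "t \<le> k" "\<not> trivial_quad k (i, j, s, t)"
  shows "\<exists>y \<in> orbit (gens0 k) (i, j, s, t). reduced k y"
proof (rule reduced_in_D4_orbit)
  have nt: "\<not> pm_cong k i j" "\<not> pm_cong k j t" "\<not> pm_cong k t s" "\<not> pm_cong k s i"
    using assms(5) by (simp_all add: trivial_quad_def)
  note rep = low_rep_pm_cong[OF assms(1)] low_rep_pm_cong[OF assms(2)]
    low_rep_pm_cong[OF assms(3)] low_rep_pm_cong[OF assms(4)]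
  show "low_rep k i \<noteq> low_rep k j" by (rule neq_if_not_pm_cong[OF rep(1,2) nt(1)])
  show "low_rep k j \<noteq> low_rep k t" by (rule neq_if_not_pm_cong[OF rep(2,4) nt(2)])
  show "low_rep k t \<noteq> low_rep k s" by (rule neq_if_not_pm_cong[OF rep(4,3) nt(3)])
  show "low_rep k s \<noteq> low_rep k i" by (rule neq_if_not_pm_cong[OF rep(3,1) nt(4)])
  show "sw_it \<in> gens0 k" "sw_js \<in> gens0 k" "sw_ij_st \<in> gens0 k"
    by (simp_all add: gens0_def)
  show "(low_rep k i, low_rep k j, low_rep k s, low_rep k t) \<in> orbit (gens0 k) (i, j, s, t)"
    by (rule low_rep_in_orbit_gens0[OF orbit.base])
  show "length (filter (\<lambda>u. k < 2 * u) [low_rep k i, low_rep k j, low_rep k s, low_rep k t]) \<le> 1"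
    by (simp add: low_rep_not_large)
qed

lemma reduced_in_orbit_gens1:
  assumes "i \<le> k" "j \<le> k" "s \<le> k" "t \<le> k" "\<not> trivial_quad k (i, j, s, t)"
  shows "\<exists>y \<in> orbit (gens1 k) (i, j, s, t). reduced k y"
proof -
  obtain t' where q: "(low_rep k i, low_rep k j, low_rep k s, t') \<in> orbit (gens1 k) (i, j, s, t)"
    and t': "pm_cong k t' t"
    by (rule low_rep_in_orbit_gens1[OF orbit.base assms(4)])
  show ?thesis
  proof (rule reduced_in_D4_orbit[OF _ _ _ q])
    have nt: "\<not> pm_cong k i j" "\<not> pm_cong k j t" "\<not> pm_cong k t s" "\<not> pm_cong k s i"
      using assms(5) by (simp_all add: trivial_quad_def)
    note rep = low_rep_pm_cong[OF assms(1)] low_rep_pm_cong[OF assms(2)]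
      low_rep_pm_cong[OF assms(3)]
    show "low_rep k i \<noteq> low_rep k j" by (rule neq_if_not_pm_cong[OF rep(1,2) nt(1)])
    show "low_rep k j \<noteq> t'" by (rule neq_if_not_pm_cong[OF rep(2) t' nt(2)])
    show "t' \<noteq> low_rep k s" by (rule neq_if_not_pm_cong[OF t' rep(3) nt(3)])
    show "low_rep k s \<noteq> low_rep k i" by (rule neq_if_not_pm_cong[OF rep(3,1) nt(4)])
    show "sw_it \<in> gens1 k" "sw_js \<in> gens1 k" "sw_ij_st \<in> gens1 k"
      by (simp_all add: gens1_def)
    show "length (filter (\<lambda>u. k < 2 * u) [low_rep k i, low_rep k j, low_rep k s, t']) \<le> 1"
      by (simp add: low_rep_not_large)
  qed
qed

theorem lemma17:
  fixes \<phi> :: "'a::field" and k :: nat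
  assumes "k \<ge> 3"
    and "\<phi> \<noteq> 0"
    and "card (cyc \<phi>) = k"
    and "circular (cyc \<phi>)"
  shows "\<forall>x \<in> nontriv_overlaps \<phi> k.
           \<exists>y \<in> orbit (if even k then gens0 k else gens1 k) x. reduced k y"
proof
  fix x assume "x \<in> nontriv_overlaps \<phi> k"
  moreover obtain i j s t where x: "x = (i, j, s, t)" by (cases x)
  ultimately have "i \<le> k" "j \<le> k" "s \<le> k" "t \<le> k" "\<not> trivial_quad k (i, j, s, t)"
    by (auto simp: nontriv_overlaps_def is_overlap_def idx_def)
  then show "\<exists>y \<in> orbit (if even k then gens0 k else gens1 k) x. reduced k y"
    unfolding x using reduced_in_orbit_gens0 reduced_in_orbit_gens1 by simp
qed

end
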